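(* Let $\lambda\ge\Delta^{-1/2}$. Let $Y=(S,R,S')$ be random with $S\sim\mu$, $\mathbb P(S'=j\mid S=i)=P_{ij}$ and $R\mid(S=i,S'=j)\sim\mathrm{Law}(R_{ij})$ for all $i,j\in\mathcal S$. Then \[ \mathbb E\bigl[(H_g(p,Y),R)\bigr]=\bigl(h^{(g)}_\mu(p),\bar r^\pi\bigr)\quad\text{for all }(p,g)\in\mathcal Z. \] Moreover, the map $(p,g)\mapsto(h^{(g)}_\mu(p),\bar r^\pi)$ is non-expansive in $d_\lambda$, and its fixed-point set equals $\{(p,\bar r^\pi):p\in\mathrm{fix}(\mathcal G)\}$.
   Context: Finite MDP with state set $\mathcal{S}=\{1,\dots,m\}$, finite action set, deterministic rewards in $[0,1]$, fixed policy inducing a transition matrix $P=(P_{ij})$ on $\mathcal S$ that is irreducible and aperiodic with stationary distribution $\mu$. $R_{ij}$ is the finite-valued $[0,1]$-valued random one-step reward conditioned on transition $i\to j$; gain $\bar r^\pi=\sum_i\mu_i\sum_jP_{ij}\mathbb E[R_{ij}]$; $\nu^{(g)}_{ij}:=\mathrm{Law}(R_{ij}-g)$. $\Theta=\{\theta_1<\dots<\theta_d\}$ with constant stride $\Delta>0$; $\Delta_d$ the probability simplex of $\mathbb R^d$; $\Delta_d^{\mathcal S}$ families $(p_i)_{i\in\mathcal S}$, $p_i\in\Delta_d$; $\mathcal Z:=\Delta_d^{\mathcal S}\times[0,1]$. For $u\in\Delta_d$, $\eta^{u,0}:=\sum_ku_k\delta_{\theta_k}$. Categorical projection $\Pi^\Theta_{\mathrm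 C}$: $\delta_x\mapsto\delta_{\theta_1}$ if $x\le\theta_1$, $\delta_{\theta_d}$ if $x\ge\theta_d$, $\frac{\theta_{k+1}-x}{\Delta}\delta_{\theta_k}+\frac{x-\theta_k}{\Delta}\delta_{\theta_{k+1}}$ if $\theta_k\le x\le\theta_{k+1}$, extended linearly to laws. For $b\in\mathbb R$, $L_bu\in\Delta_d$ is defined by $\Pi^\Theta_{\mathrm C}(\text{law of }X+b,\ X\sim\eta^{u,0})=\eta^{L_bu,0}$. $\mathcal G_g(p)$ is the unique $q\in\Delta_d^{\mathcal S}$ with $\eta^{q_i,0}=\Pi^\Theta_{\mathrm C}(\sum_jP_{ij}(\nu^{(g)}_{ij}\ast\eta^{p_j,0}))$ for all $i$; $\mathcal G:=\mathcal G_{\bar r^\pi}$, $\mathrm{fix}(\mathcal G)$ its fixed-point set. $h^{(g)}_\mu(p)_i:=(1-\mu_i)p_i+\mu_i\mathcal G_g(p)_i$. $H_g(p,(s,r,s'))=q$ with $q_u=p_u$ for $u\ne s$, $q_s=L_{r-g}p_{s'}$. Coordinate Cramér metric: $F_u(\theta_k):=\sum_{j\le k}u_j$, $\ell^\Theta_{\mathrm C}(u,v)^2:=\Delta\sum_{k=1}^{d-1}(F_u(\theta_k)-F_v(\theta_k))^2$, $\ell^\Theta_{\mathrm C,\infty}(p,q):=\max_i\ell^\Theta_{\mathrm C}(p_i,q_i)$; $d_\lambda((p,g),(q,g')):=\ell^\Theta_{\mathrm C,\infty}(p,q)+\lambda|g-g'|$. *)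

theory Defs
  imports "HOL-Probability.Probability"
begin

text \<open>Atoms: theta_k = th0 + k * Dl for k = 0..d-1 (0-indexed version of theta_1 < ... < theta_d).\<close>

definition Ptr :: "('s \<Rightarrow> 's pmf) \<Rightarrow> 's \<Rightarrow> 's \<Rightarrow> real" where
  "Ptr K i j = pmf (K i) j"

fun Ppow :: "('s::finite \<Rightarrow> 's pmf) \<Rightarrow> nat \<Rightarrow> 's \<Rightarrow> 's \<Rightarrow> real" where
  "Ppow K 0 i j = (if i = j then 1 else 0)"
| "Ppow K (Suc n) i j = (\<Sum>l\<in>UNIV. Ppow K n i l * Ptr K l j)"

definition irreducible_chain :: "('s::finite \<Rightarrow> 's pmf) \<Rightarrow> bool" where
  "irreducible_chain K \<longleftrightarrow> (\<forall>i j. \<exists>n. Ppow K n i j > 0)"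

definition aperiodic_chain :: "('s::finite \<Rightarrow> 's pmf) \<Rightarrow> bool" where
  "aperiodic_chain K \<longleftrightarrow> (\<forall>i. Gcd {n. n > 0 \<and> Ppow K n i i > 0} = 1)"

definition stationary :: "('s::finite \<Rightarrow> 's pmf) \<Rightarrow> 's pmf \<Rightarrow> bool" where
  "stationary K mu \<longleftrightarrow> (\<forall>j. (\<Sum>i\<in>UNIV. pmf mu i * Ptr K i j) = pmf mu j)"

definition gain :: "('s::finite \<Rightarrow> 's pmf) \<Rightarrow> 's pmf \<Rightarrow> ('s \<Rightarrow> 's \<Rightarrow> real pmf) \<Rightarrow> real" where
  "gain K mu Rl = (\<Sum>i\<in>UNIV. pmf mu i * (\<Sum>j\<in>UNIV. Ptr K i j * measure_pmf.expectation (Rl i j) (\<lambda>r. r)))"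

definition theta :: "real \<Rightarrow> real \<Rightarrow> nat \<Rightarrow> real" where
  "theta th0 Dl k = th0 + real k * Dl"

definition cat_simplex :: "nat \<Rightarrow> (nat \<Rightarrow> real) set" where
  "cat_simplex d = {u. (\<forall>k. 0 \<le> u k) \<and> (\<forall>k\<ge>d. u k = 0) \<and> (\<Sum>k<d. u k) = 1}"

text \<open>Categorical projection of a Dirac mass delta_x, as a weight vector on the atoms.\<close>
definition cproj :: "real \<Rightarrow> real \<Rightarrow> nat \<Rightarrow> real \<Rightarrow> nat \<Rightarrow> real" where
  "cproj th0 Dl d x k =
     (if x \<le> theta th0 Dl 0 then (if k = 0 then 1 else 0)
      else if x \<ge> theta th0 Dl (d - 1) then (if k = d - 1 then 1 else 0)
      else (let j = nat \<lfloor>(x - th0) / Dl\<rfloor> in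
            if k = j then (theta th0 Dl (j + 1) - x) / Dl
            else if k = j + 1 then (x - theta th0 Dl j) / Dl
            else 0))"

definition cprojL :: "real \<Rightarrow> real \<Rightarrow> nat \<Rightarrow> real pmf \<Rightarrow> nat \<Rightarrow> real" where
  "cprojL th0 Dl d nu k = measure_pmf.expectation nu (\<lambda>x. cproj th0 Dl d x k)"

text \<open>eta^{u,0} = sum_k u_k delta_{theta_k}.\<close>
definition eta :: "real \<Rightarrow> real \<Rightarrow> nat \<Rightarrow> (nat \<Rightarrow> real) \<Rightarrow> real pmf" where
  "eta th0 Dl d u = embed_pmf (\<lambda>x. \<Sum>k\<in>{k. k < d \<and> theta th0 Dl k = x}. u k)"

definition conv_pmf :: "real pmf \<Rightarrow> real pmf \<Rightarrow> real pmf" where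
  "conv_pmf nu eta' = bind_pmf nu (\<lambda>x. map_pmf (\<lambda>y. x + y) eta')"

definition Lshift :: "real \<Rightarrow> real \<Rightarrow> nat \<Rightarrow> real \<Rightarrow> (nat \<Rightarrow> real) \<Rightarrow> nat \<Rightarrow> real" where
  "Lshift th0 Dl d b u = cprojL th0 Dl d (map_pmf (\<lambda>x. x + b) (eta th0 Dl d u))"

definition Gop :: "real \<Rightarrow> real \<Rightarrow> nat \<Rightarrow> ('s \<Rightarrow> 's pmf) \<Rightarrow> ('s \<Rightarrow> 's \<Rightarrow> real pmf)
    \<Rightarrow> real \<Rightarrow> ('s \<Rightarrow> nat \<Rightarrow> real) \<Rightarrow> 's \<Rightarrow> nat \<Rightarrow> real" where
  "Gop th0 Dl d K Rl g p i = cprojL th0 Dl d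
     (bind_pmf (K i) (\<lambda>j. conv_pmf (map_pmf (\<lambda>r. r - g) (Rl i j)) (eta th0 Dl d (p j))))"

definition hmu :: "real \<Rightarrow> real \<Rightarrow> nat \<Rightarrow> ('s \<Rightarrow> 's pmf) \<Rightarrow> 's pmf \<Rightarrow> ('s \<Rightarrow> 's \<Rightarrow> real pmf)
    \<Rightarrow> real \<Rightarrow> ('s \<Rightarrow> nat \<Rightarrow> real) \<Rightarrow> 's \<Rightarrow> nat \<Rightarrow> real" where
  "hmu th0 Dl d K mu Rl g p i k = (1 - pmf mu i) * p i k + pmf mu i * Gop th0 Dl d K Rl g p i k"

definition Hupd :: "real \<Rightarrow> real \<Rightarrow> nat \<Rightarrow> real \<Rightarrow> ('s \<Rightarrow> nat \<Rightarrow> real) \<Rightarrow> 's \<times> real \<times> 's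
    \<Rightarrow> 's \<Rightarrow> nat \<Rightarrow> real" where
  "Hupd th0 Dl d g p y = (case y of (s, r, s') \<Rightarrow> p(s := Lshift th0 Dl d (r - g) (p s')))"

definition Ylaw :: "('s \<Rightarrow> 's pmf) \<Rightarrow> 's pmf \<Rightarrow> ('s \<Rightarrow> 's \<Rightarrow> real pmf) \<Rightarrow> ('s \<times> real \<times> 's) pmf" where
  "Ylaw K mu Rl = bind_pmf mu (\<lambda>s. bind_pmf (K s) (\<lambda>s'. map_pmf (\<lambda>r. (s, r, s')) (Rl s s')))"

definition Zset :: "nat \<Rightarrow> (('s \<Rightarrow> nat \<Rightarrow> real) \<times> real) set" where
  "Zset d = {(p, g). (\<forall>i. p i \<in> cat_simplex d) \<and> g \<in> {0..1}}"

definition cdf :: "(nat \<Rightarrow> real) \<Rightarrow> nat \<Rightarrow> real" where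
  "cdf u k = (\<Sum>j\<le>k. u j)"

definition lC :: "real \<Rightarrow> nat \<Rightarrow> (nat \<Rightarrow> real) \<Rightarrow> (nat \<Rightarrow> real) \<Rightarrow> real" where
  "lC Dl d u v = sqrt (Dl * (\<Sum>k<d - 1. (cdf u k - cdf v k)\<^sup>2))"

definition lCinf :: "real \<Rightarrow> nat \<Rightarrow> ('s::finite \<Rightarrow> nat \<Rightarrow> real) \<Rightarrow> ('s \<Rightarrow> nat \<Rightarrow> real) \<Rightarrow> real" where
  "lCinf Dl d p q = Max (range (\<lambda>i. lC Dl d (p i) (q i)))"

definition dlam :: "real \<Rightarrow> nat \<Rightarrow> real \<Rightarrow> ('s::finite \<Rightarrow> nat \<Rightarrow> real) \<times> real
    \<Rightarrow> ('s \<Rightarrow> nat \<Rightarrow> real) \<times> real \<Rightarrow> real" where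
  "dlam Dl d lam z z' = lCinf Dl d (fst z) (fst z') + lam * \<bar>snd z - snd z'\<bar>"

definition Tmap :: "real \<Rightarrow> real \<Rightarrow> nat \<Rightarrow> ('s::finite \<Rightarrow> 's pmf) \<Rightarrow> 's pmf \<Rightarrow> ('s \<Rightarrow> 's \<Rightarrow> real pmf)
    \<Rightarrow> ('s \<Rightarrow> nat \<Rightarrow> real) \<times> real \<Rightarrow> ('s \<Rightarrow> nat \<Rightarrow> real) \<times> real" where
  "Tmap th0 Dl d K mu Rl z = (hmu th0 Dl d K mu Rl (snd z) (fst z), gain K mu Rl)"

end

theory Submission
  imports Defs
begin

(*
  Averaging the update H_g(p, Y) over Y: coordinate s is replaced with probability mu_s, by the
  projected shift L_(R-g) p_(S') whose conditional mean is G_g(p)_s, and kept otherwise; this is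
  h^(g)_mu(p)_s.

  The Cramer distance is sqrt Dl times the Euclidean distance of the grid CDFs, so it is jointly
  convex and it suffices to control a single projected shift L_b. After summation by parts, L_b
  acts on CDF differences by a doubly substochastic matrix and is therefore non-expansive
  (Schur's test). Replacing b by b' changes the CDF of each projected atom by a vector with
  entries in [0, |b - b'| / Dl] summing to at most |b - b'| / Dl, so by at most
  |b - b'| / sqrt Dl <= lam |b - b'| in Cramer distance.

  An irreducible chain has mu_i > 0 for every i, so h_mu(p) = p iff G(p) = p, and the second
  component of a fixed point is the gain, which lies in [0, 1] as the mean reward under Y.
*)

subsection \<open>Expectations over finitely supported laws\<close>

lemma expectation_eq_sum_set_pmf:
  fixes f :: "'a \<Rightarrow> real"
  assumes "finite (set_pmf M)"
  shows "measure_pmf.expectation M f = (\<Sum>x\<in>set_pmf M. pmf M x * f x)"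
  by (subst integral_measure_pmf_real[OF assms]) (auto simp: mult.commute)

lemma expectation_finite_UNIV:
  fixes M :: "'s::finite pmf" and f :: "'s \<Rightarrow> real"
  shows "measure_pmf.expectation M f = (\<Sum>x\<in>UNIV. pmf M x * f x)"
  by (subst integral_measure_pmf_real[of UNIV]) (auto simp: mult.commute)

lemma expectation_bind_pmf_finite:
  fixes f :: "'b \<Rightarrow> real"
  assumes "finite (set_pmf M)" "\<And>x. x \<in> set_pmf M \<Longrightarrow> finite (set_pmf (N x))"
  shows "measure_pmf.expectation (bind_pmf M N) f
       = measure_pmf.expectation M (\<lambda>x. measure_pmf.expectation (N x) f)"
proof -
  have "measure_pmf.expectation (bind_pmf M N) f
      = (\<Sum>x\<in>set_pmf M. pmf M x *\<^sub>R measure_pmf.expectation (N x) f)"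
    by (rule pmf_expectation_bind) (use assms in auto)
  then show ?thesis by (simp add: expectation_eq_sum_set_pmf[OF assms(1)])
qed

lemma expectation_if_eq:
  fixes A c :: real
  shows "measure_pmf.expectation M (\<lambda>x. if x = a then A else c) = pmf M a * A + (1 - pmf M a) * c"
proof -
  have "(\<lambda>x. if x = a then A else c) = (\<lambda>x. c + (A - c) * indicator {a} x)"
    by (auto simp: indicator_def)
  moreover have "measure_pmf.expectation M (\<lambda>x. c + (A - c) * indicator {a} x) = c + (A - c) * pmf M a"
    by (subst Bochner_Integration.integral_add)
      (auto simp: measure_pmf_single measure_pmf.emeasure_finite less_top[symmetric]
        intro!: integrable_real_indicator)
  ultimately show ?thesis by (simp add: algebra_simps)
qed

lemma expectation_in_unit_interval:
  fixes f :: "'a \<Rightarrow> real"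
  assumes "\<And>x. x \<in> set_pmf M \<Longrightarrow> f x \<in> {0..1}"
  shows "measure_pmf.expectation M f \<in> {0..1}"
proof -
  have "AE x in M. 0 \<le> f x" "AE x in M. f x \<le> 1" using assms by (auto simp: AE_measure_pmf_iff)
  moreover have "integrable M f"
    by (rule measure_pmf.integrable_const_bound[where B = 1]) (use assms in \<open>auto simp: AE_measure_pmf_iff\<close>)
  ultimately show ?thesis
    by (auto intro!: integral_nonneg_AE measure_pmf.integral_le_const)
qed

subsection \<open>The categorical projection on the grid\<close>

lemma theta_eq_iff: "Dl > 0 \<Longrightarrow> theta th0 Dl a = theta th0 Dl b \<longleftrightarrow> a = b"
  by (auto simp: theta_def)

definition cproj_cdf :: "real \<Rightarrow> real \<Rightarrow> nat \<Rightarrow> real \<Rightarrow> real" where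
  "cproj_cdf th0 Dl k x = max 0 (min 1 (real k + 1 - (x - th0) / Dl))"

lemma sum_atMost_two_deltas:
  fixes a b :: real and j k :: nat
  shows "(\<Sum>i\<le>k. if i = j then a else if i = j + 1 then b else 0)
       = (if j \<le> k then a else 0) + (if j + 1 \<le> k then b else 0)"
proof -
  have "(\<Sum>i\<le>k. if i = j then a else if i = j + 1 then b else 0)
      = (\<Sum>i\<le>k. (if i = j then a else 0) + (if i = j + 1 then b else 0))"
    by (rule sum.cong) simp_all
  also have "\<dots> = (\<Sum>i\<le>k. if i = j then a else 0) + (\<Sum>i\<le>k. if i = j + 1 then b else 0)"
    by (rule sum.distrib)
  finally show ?thesis by simp
qed

lemma cdf_cproj_interior:
  assumes Dl: "Dl > 0" and lo: "\<not> x \<le> theta th0 Dl 0" and hi: "\<not> x \<ge> theta th0 Dl (d - 1)"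
  shows "cdf (cproj th0 Dl d x) k = cproj_cdf th0 Dl k x"
proof -
  define t where "t = (x - th0) / Dl"
  have x: "x = th0 + t * Dl" using Dl by (simp add: t_def)
  have "t > 0" using lo Dl by (simp add: t_def theta_def)
  define j where "j = nat \<lfloor>t\<rfloor>"
  have j: "real j \<le> t" "t < real j + 1" using \<open>t > 0\<close> by (simp_all add: j_def)
  have a: "(theta th0 Dl (j + 1) - x) / Dl = real j + 1 - t"
    and b: "(x - theta th0 Dl j) / Dl = t - real j"
    using Dl by (simp_all add: x theta_def field_simps)
  have "cdf (cproj th0 Dl d x) k
      = (\<Sum>i\<le>k. if i = j then real j + 1 - t else if i = j + 1 then t - real j else 0)"
    unfolding cdf_def cproj_def
    using lo hi by (simp only: Let_def t_def[symmetric] j_def[symmetric] if_False a b)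
  also have "\<dots> = (if j \<le> k then real j + 1 - t else 0) + (if j + 1 \<le> k then t - real j else 0)"
    by (rule sum_atMost_two_deltas)
  also have "\<dots> = cproj_cdf th0 Dl k x"
    unfolding cproj_cdf_def t_def[symmetric] using j
    by (cases "k < j"; cases "k = j") (auto simp: max_def min_def)
  finally show ?thesis .
qed

lemma cdf_cproj:
  assumes Dl: "Dl > 0" and k: "k < d - 1"
  shows "cdf (cproj th0 Dl d x) k = cproj_cdf th0 Dl k x"
proof (cases "x \<le> theta th0 Dl 0")
  case True
  then have "(x - th0) / Dl \<le> 0" using Dl by (simp add: theta_def divide_nonpos_pos)
  then show ?thesis using True by (simp add: cdf_def cproj_def cproj_cdf_def)
next
  case lo: False
  show ?thesis
  proof (cases "x \<ge> theta th0 Dl (d - 1)")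
    case True
    then have "real (d - 1) \<le> (x - th0) / Dl" using Dl by (simp add: theta_def pos_le_divide_eq)
    moreover have "real (d - 1) \<ge> real k + 1" using k by linarith
    ultimately show ?thesis using True lo k by (simp add: cdf_def cproj_def cproj_cdf_def)
  next
    case False
    then show ?thesis by (rule cdf_cproj_interior[OF Dl lo])
  qed
qed

lemma cproj_cdf_bounds: "0 \<le> cproj_cdf th0 Dl k x" "cproj_cdf th0 Dl k x \<le> 1"
  unfolding cproj_cdf_def by auto

lemma cproj_cdf_antimono:
  assumes "Dl > 0" "x \<le> y"
  shows "cproj_cdf th0 Dl k y \<le> cproj_cdf th0 Dl k x"
proof -
  have "(x - th0) / Dl \<le> (y - th0) / Dl" using assms by (simp add: divide_right_mono)
  then show ?thesis unfolding cproj_cdf_def by linarith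
qed

lemma clamp_diff_le:
  fixes a b :: real
  shows "b \<le> a \<Longrightarrow> max 0 (min 1 a) - max 0 (min 1 b) \<le> a - b"
  by (auto simp: max_def min_def)

lemma cproj_cdf_diff_le:
  assumes "Dl > 0" "x \<le> y"
  shows "cproj_cdf th0 Dl k x - cproj_cdf th0 Dl k y \<le> (y - x) / Dl"
proof -
  have "(x - th0) / Dl \<le> (y - th0) / Dl" using assms by (simp add: divide_right_mono)
  then have "cproj_cdf th0 Dl k x - cproj_cdf th0 Dl k y \<le> (y - th0) / Dl - (x - th0) / Dl"
    unfolding cproj_cdf_def using clamp_diff_le by fastforce
  also have "\<dots> = (y - x) / Dl" using assms by (simp add: field_simps)
  finally show ?thesis .
qed

lemma sum_cproj_cdf:
  "(\<Sum>k<n. cproj_cdf th0 Dl k x) = max 0 (min (real n) (real n - (x - th0) / Dl))"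
  by (induction n) (simp_all add: cproj_cdf_def max_def min_def)

lemma sum_cproj_cdf_diff_le:
  assumes "Dl > 0" "x \<le> y"
  shows "(\<Sum>k<n. cproj_cdf th0 Dl k x) - (\<Sum>k<n. cproj_cdf th0 Dl k y) \<le> (y - x) / Dl"
proof -
  have e: "(y - th0) / Dl - (x - th0) / Dl = (y - x) / Dl" using assms by (simp add: field_simps)
  have "(x - th0) / Dl \<le> (y - th0) / Dl" using assms by (simp add: divide_right_mono)
  then show ?thesis unfolding sum_cproj_cdf using e by linarith
qed

text \<open>Each term lies in \<open>[0, c]\<close> with \<open>c = (y - x) / Dl\<close>, and the terms sum to at
  most \<open>c\<close>.\<close>
lemma sum_sq_cproj_cdf_diff_le:
  assumes Dl: "Dl > 0"
  shows "(\<Sum>k<n. (cproj_cdf th0 Dl k x - cproj_cdf th0 Dl k y)\<^sup>2) \<le> ((x - y) / Dl)\<^sup>2"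
proof -
  have le: "(\<Sum>k<n. (cproj_cdf th0 Dl k x - cproj_cdf th0 Dl k y)\<^sup>2) \<le> ((y - x) / Dl)\<^sup>2"
    if xy: "x \<le> y" for x y
  proof -
    define c where "c = (y - x) / Dl"
    define a where "a k = cproj_cdf th0 Dl k x - cproj_cdf th0 Dl k y" for k
    have a0: "0 \<le> a k" and ac: "a k \<le> c" for k
      using cproj_cdf_antimono[OF Dl xy] cproj_cdf_diff_le[OF Dl xy] by (simp_all add: a_def c_def)
    have "(\<Sum>k<n. (a k)\<^sup>2) \<le> (\<Sum>k<n. c * a k)"
    proof (rule sum_mono)
      show "(a k)\<^sup>2 \<le> c * a k" for k
        unfolding power2_eq_square using ac[of k] a0[of k] by (rule mult_right_mono)
    qed
    also have "\<dots> = c * (\<Sum>k<n. a k)" by (rule sum_distrib_left[symmetric])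
    also have "\<dots> \<le> c * c"
    proof (rule mult_left_mono)
      show "(\<Sum>k<n. a k) \<le> c"
        unfolding a_def c_def sum_subtractf by (rule sum_cproj_cdf_diff_le[OF Dl xy])
      show "0 \<le> c" using a0[of 0] ac[of 0] by linarith
    qed
    finally show ?thesis by (simp only: a_def c_def power2_eq_square)
  qed
  have swap: "((y - x) / Dl)\<^sup>2 = ((x - y) / Dl)\<^sup>2" by (simp add: power_divide power2_commute)
  show ?thesis
  proof (cases "x \<le> y")
    case True
    then show ?thesis using le[of x y] by (simp only: swap)
  next
    case False
    have "(\<Sum>k<n. (cproj_cdf th0 Dl k x - cproj_cdf th0 Dl k y)\<^sup>2)
        = (\<Sum>k<n. (cproj_cdf th0 Dl k y - cproj_cdf th0 Dl k x)\<^sup>2)"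
      by (simp only: power2_commute)
    also have "\<dots> \<le> ((x - y) / Dl)\<^sup>2" using False le[of y x] by simp
    finally show ?thesis .
  qed
qed

lemma
  assumes Dl: "Dl > 0" and u: "u \<in> cat_simplex d"
  shows pmf_eta: "pmf (eta th0 Dl d u) x = (\<Sum>k\<in>{k. k < d \<and> theta th0 Dl k = x}. u k)"
    and set_pmf_eta: "set_pmf (eta th0 Dl d u) \<subseteq> theta th0 Dl ` {..<d}"
proof -
  define f where "f x = (\<Sum>k\<in>{k. k < d \<and> theta th0 Dl k = x}. u k)" for x
  have nonneg: "0 \<le> f x" for x unfolding f_def using u by (auto simp: cat_simplex_def intro: sum_nonneg)
  have inj: "inj_on (theta th0 Dl) {..<d}" using theta_eq_iff[OF Dl] by (auto simp: inj_on_def)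
  have f_theta: "f (theta th0 Dl m) = u m" if "m < d" for m
  proof -
    have "{k. k < d \<and> theta th0 Dl k = theta th0 Dl m} = {m}" using that theta_eq_iff[OF Dl] by auto
    then show ?thesis by (simp add: f_def)
  qed
  have f_out: "f x = 0" if "x \<notin> theta th0 Dl ` {..<d}" for x
  proof -
    have "{k. k < d \<and> theta th0 Dl k = x} = {}" using that by auto
    then show ?thesis unfolding f_def by (simp only: sum.empty)
  qed
  have "(\<integral>\<^sup>+x. ennreal (f x) \<partial>count_space UNIV) = (\<Sum>x\<in>theta th0 Dl ` {..<d}. ennreal (f x))"
    by (rule nn_integral_count_space') (auto simp: f_out)
  also have "\<dots> = ennreal (\<Sum>x\<in>theta th0 Dl ` {..<d}. f x)"
    using nonneg by (simp add: sum_ennreal)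
  also have "(\<Sum>x\<in>theta th0 Dl ` {..<d}. f x) = (\<Sum>m<d. u m)"
    using inj f_theta by (simp add: sum.reindex)
  finally have prob: "(\<integral>\<^sup>+x. ennreal (f x) \<partial>count_space UNIV) = 1"
    using u by (simp add: cat_simplex_def)
  have eta: "eta th0 Dl d u = embed_pmf f" unfolding eta_def f_def by simp
  show "pmf (eta th0 Dl d u) x = (\<Sum>k\<in>{k. k < d \<and> theta th0 Dl k = x}. u k)"
    by (simp only: eta pmf_embed_pmf[OF nonneg prob] f_def)
  show "set_pmf (eta th0 Dl d u) \<subseteq> theta th0 Dl ` {..<d}"
    unfolding eta using set_embed_pmf[OF nonneg prob] f_out by auto
qed

lemma pmf_eta_theta:
  assumes Dl: "Dl > 0" and u: "u \<in> cat_simplex d" and m: "m < d"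
  shows "pmf (eta th0 Dl d u) (theta th0 Dl m) = u m"
proof -
  have "{k. k < d \<and> theta th0 Dl k = theta th0 Dl m} = {m}" using m theta_eq_iff[OF Dl] by auto
  then show ?thesis by (simp add: pmf_eta[OF Dl u])
qed

lemma finite_set_pmf_eta: "Dl > 0 \<Longrightarrow> u \<in> cat_simplex d \<Longrightarrow> finite (set_pmf (eta th0 Dl d u))"
  by (rule finite_subset[OF set_pmf_eta]) simp_all

lemma expectation_eta:
  assumes Dl: "Dl > 0" and u: "u \<in> cat_simplex d"
  shows "measure_pmf.expectation (eta th0 Dl d u) f = (\<Sum>m<d. u m * f (theta th0 Dl m))"
proof -
  have inj: "inj_on (theta th0 Dl) {..<d}" using theta_eq_iff[OF Dl] by (auto simp: inj_on_def)
  have "measure_pmf.expectation (eta th0 Dl d u) f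
      = (\<Sum>x\<in>theta th0 Dl ` {..<d}. f x * pmf (eta th0 Dl d u) x)"
    by (rule integral_measure_pmf_real) (use set_pmf_eta[OF Dl u] in auto)
  also have "\<dots> = (\<Sum>m<d. u m * f (theta th0 Dl m))"
    unfolding sum.reindex[OF inj] by (intro sum.cong) (simp_all add: pmf_eta_theta[OF Dl u])
  finally show ?thesis .
qed

lemma Lshift_eq_sum:
  assumes "Dl > 0" "u \<in> cat_simplex d"
  shows "Lshift th0 Dl d b u = (\<lambda>k. \<Sum>m<d. u m * cproj th0 Dl d (theta th0 Dl m + b) k)"
  unfolding Lshift_def cprojL_def by (simp add: expectation_eta[OF assms])

lemma cdf_Lshift:
  assumes Dl: "Dl > 0" and u: "u \<in> cat_simplex d" and k: "k < d - 1"
  shows "cdf (Lshift th0 Dl d b u) k = (\<Sum>m<d. u m * cproj_cdf th0 Dl k (theta th0 Dl m + b))"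
proof -
  have "cdf (Lshift th0 Dl d b u) k = (\<Sum>k'\<le>k. \<Sum>m<d. u m * cproj th0 Dl d (theta th0 Dl m + b) k')"
    unfolding cdf_def by (simp add: Lshift_eq_sum[OF Dl u])
  also have "\<dots> = (\<Sum>m<d. u m * cdf (cproj th0 Dl d (theta th0 Dl m + b)) k)"
    unfolding cdf_def by (subst sum.swap) (simp add: sum_distrib_left)
  finally show ?thesis by (simp add: cdf_cproj[OF Dl k])
qed

lemma Gop_eq_expectation:
  fixes K :: "'s::finite \<Rightarrow> 's pmf"
  assumes Dl: "Dl > 0" and p: "\<And>j. p j \<in> cat_simplex d"
    and fin: "\<And>j. finite (set_pmf (Rl i j))"
  shows "Gop th0 Dl d K Rl g p i = (\<lambda>k. measure_pmf.expectation (K i)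
           (\<lambda>j. measure_pmf.expectation (Rl i j) (\<lambda>r. Lshift th0 Dl d (r - g) (p j) k)))"
proof
  fix k
  have "measure_pmf.expectation (conv_pmf (map_pmf (\<lambda>r. r - g) (Rl i j)) (eta th0 Dl d (p j)))
          (\<lambda>x. cproj th0 Dl d x k)
      = measure_pmf.expectation (Rl i j) (\<lambda>r. Lshift th0 Dl d (r - g) (p j) k)" for j
    unfolding conv_pmf_def Lshift_def cprojL_def
    by (subst expectation_bind_pmf_finite) (simp_all add: fin finite_set_pmf_eta[OF Dl p] add.commute)
  moreover have "finite (set_pmf (conv_pmf (map_pmf (\<lambda>r. r - g) (Rl i j)) (eta th0 Dl d (p j))))" for j
    unfolding conv_pmf_def using fin finite_set_pmf_eta[OF Dl p] by simp
  ultimately show "Gop th0 Dl d K Rl g p i k = measure_pmf.expectation (K i)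
           (\<lambda>j. measure_pmf.expectation (Rl i j) (\<lambda>r. Lshift th0 Dl d (r - g) (p j) k))"
    unfolding Gop_def cprojL_def by (simp add: expectation_bind_pmf_finite)
qed

subsection \<open>The Cramer distance\<close>

lemma lC_eq_L2_set:
  "Dl \<ge> 0 \<Longrightarrow> lC Dl d u v = sqrt Dl * L2_set (\<lambda>k. cdf u k - cdf v k) {..<d - 1}"
  by (simp add: lC_def L2_set_def real_sqrt_mult)

lemma lC_triangle:
  assumes "Dl \<ge> 0"
  shows "lC Dl d u w \<le> lC Dl d u v + lC Dl d v w"
proof -
  have "L2_set (\<lambda>k. cdf u k - cdf w k) {..<d - 1}
      \<le> L2_set (\<lambda>k. cdf u k - cdf v k) {..<d - 1} + L2_set (\<lambda>k. cdf v k - cdf w k) {..<d - 1}"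
    using L2_set_triangle_ineq[of "\<lambda>k. cdf u k - cdf v k" "\<lambda>k. cdf v k - cdf w k"] by simp
  then show ?thesis
    unfolding lC_eq_L2_set[OF assms] distrib_left[symmetric] by (rule mult_left_mono) (simp add: assms)
qed

lemma lC_add_le:
  assumes "Dl \<ge> 0"
  shows "lC Dl d (\<lambda>k. u k + u' k) (\<lambda>k. v k + v' k) \<le> lC Dl d u v + lC Dl d u' v'"
proof -
  have "L2_set (\<lambda>k. cdf (\<lambda>k. u k + u' k) k - cdf (\<lambda>k. v k + v' k) k) {..<d - 1}
      = L2_set (\<lambda>k. (cdf u k - cdf v k) + (cdf u' k - cdf v' k)) {..<d - 1}"
    by (simp add: cdf_def sum.distrib algebra_simps)
  also have "\<dots> \<le> L2_set (\<lambda>k. cdf u k - cdf v k) {..<d - 1} + L2_set (\<lambda>k. cdf u' k - cdf v' k) {..<d - 1}"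
    by (rule L2_set_triangle_ineq)
  finally show ?thesis
    unfolding lC_eq_L2_set[OF assms] distrib_left[symmetric] by (rule mult_left_mono) (simp add: assms)
qed

lemma lC_scale:
  assumes "Dl \<ge> 0" "c \<ge> 0"
  shows "lC Dl d (\<lambda>k. c * u k) (\<lambda>k. c * v k) = c * lC Dl d u v"
proof -
  have "(\<lambda>k. cdf (\<lambda>k. c * u k) k - cdf (\<lambda>k. c * v k) k) = (\<lambda>k. c * (cdf u k - cdf v k))"
    by (simp add: cdf_def sum_distrib_left right_diff_distrib)
  then show ?thesis
    unfolding lC_eq_L2_set[OF assms(1)] by (simp add: L2_set_right_distrib[OF assms(2)])
qed

lemma lC_sum_le:
  assumes Dl: "Dl \<ge> 0" and w: "\<And>x. x \<in> A \<Longrightarrow> w x \<ge> 0"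
  shows "lC Dl d (\<lambda>k. \<Sum>x\<in>A. w x * U x k) (\<lambda>k. \<Sum>x\<in>A. w x * V x k)
       \<le> (\<Sum>x\<in>A. w x * lC Dl d (U x) (V x))"
  using w
proof (induction A rule: infinite_finite_induct)
  case (insert a A)
  have "lC Dl d (\<lambda>k. \<Sum>x\<in>insert a A. w x * U x k) (\<lambda>k. \<Sum>x\<in>insert a A. w x * V x k)
      \<le> lC Dl d (\<lambda>k. w a * U a k) (\<lambda>k. w a * V a k)
        + lC Dl d (\<lambda>k. \<Sum>x\<in>A. w x * U x k) (\<lambda>k. \<Sum>x\<in>A. w x * V x k)"
    using lC_add_le[OF Dl] insert.hyps by simp
  also have "\<dots> \<le> w a * lC Dl d (U a) (V a) + (\<Sum>x\<in>A. w x * lC Dl d (U x) (V x))"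
    using insert.IH insert.prems lC_scale[OF Dl] by simp
  finally show ?case using insert.hyps by simp
qed (simp_all add: lC_def cdf_def)

lemma lC_expectation_le:
  assumes Dl: "Dl \<ge> 0" and fin: "finite (set_pmf M)"
    and B: "\<And>x. x \<in> set_pmf M \<Longrightarrow> lC Dl d (U x) (V x) \<le> B"
  shows "lC Dl d (\<lambda>k. measure_pmf.expectation M (\<lambda>x. U x k))
                 (\<lambda>k. measure_pmf.expectation M (\<lambda>x. V x k)) \<le> B"
proof -
  have "lC Dl d (\<lambda>k. measure_pmf.expectation M (\<lambda>x. U x k))
                 (\<lambda>k. measure_pmf.expectation M (\<lambda>x. V x k))
      \<le> (\<Sum>x\<in>set_pmf M. pmf M x * lC Dl d (U x) (V x))"
    unfolding expectation_eq_sum_set_pmf[OF fin] by (rule lC_sum_le[OF Dl]) simp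
  also have "\<dots> \<le> (\<Sum>x\<in>set_pmf M. pmf M x * B)"
    by (intro sum_mono mult_left_mono B) simp_all
  also have "\<dots> = B" by (simp add: sum_distrib_right[symmetric] sum_pmf_eq_1[OF fin])
  finally show ?thesis .
qed

lemma lC_cproj_le:
  assumes Dl: "Dl > 0"
  shows "lC Dl d (cproj th0 Dl d x) (cproj th0 Dl d y) \<le> \<bar>x - y\<bar> / sqrt Dl"
proof -
  have "lC Dl d (cproj th0 Dl d x) (cproj th0 Dl d y)
      = sqrt (Dl * (\<Sum>k<d - 1. (cproj_cdf th0 Dl k x - cproj_cdf th0 Dl k y)\<^sup>2))"
    unfolding lC_def by (simp add: cdf_cproj[OF Dl])
  also have "\<dots> \<le> sqrt (Dl * ((x - y) / Dl)\<^sup>2)"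
    using Dl sum_sq_cproj_cdf_diff_le[OF Dl] by simp
  also have "\<dots> = \<bar>x - y\<bar> / sqrt Dl"
    using Dl by (simp add: power_divide real_sqrt_mult real_sqrt_divide field_simps)
  finally show ?thesis .
qed

lemma lC_Lshift_shift_le:
  assumes Dl: "Dl > 0" and u: "u \<in> cat_simplex d"
  shows "lC Dl d (Lshift th0 Dl d b u) (Lshift th0 Dl d b' u) \<le> \<bar>b - b'\<bar> / sqrt Dl"
proof -
  have u_nonneg: "\<And>m. 0 \<le> u m" and u_sum: "(\<Sum>m<d. u m) = 1" using u by (auto simp: cat_simplex_def)
  have "lC Dl d (Lshift th0 Dl d b u) (Lshift th0 Dl d b' u)
      \<le> (\<Sum>m<d. u m * lC Dl d (cproj th0 Dl d (theta th0 Dl m + b)) (cproj th0 Dl d (theta th0 Dl m + b')))"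
    unfolding Lshift_eq_sum[OF Dl u] using Dl u_nonneg by (intro lC_sum_le) simp_all
  also have "\<dots> \<le> (\<Sum>m<d. u m * (\<bar>b - b'\<bar> / sqrt Dl))"
  proof (intro sum_mono mult_left_mono)
    show "lC Dl d (cproj th0 Dl d (theta th0 Dl m + b)) (cproj th0 Dl d (theta th0 Dl m + b'))
        \<le> \<bar>b - b'\<bar> / sqrt Dl" for m
      using lC_cproj_le[OF Dl, of d th0 "theta th0 Dl m + b" "theta th0 Dl m + b'"] by simp
  qed (rule u_nonneg)
  also have "\<dots> = \<bar>b - b'\<bar> / sqrt Dl" unfolding sum_distrib_right[symmetric] u_sum by simp
  finally show ?thesis .
qed

lemma Cauchy_Schwarz_ineq_sum_weighted:
  fixes w a :: "'a \<Rightarrow> real"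
  assumes "\<And>x. x \<in> A \<Longrightarrow> 0 \<le> w x"
  shows "(\<Sum>x\<in>A. w x * a x)\<^sup>2 \<le> (\<Sum>x\<in>A. w x) * (\<Sum>x\<in>A. w x * (a x)\<^sup>2)"
proof -
  have "(\<Sum>x\<in>A. sqrt (w x) * (sqrt (w x) * a x))\<^sup>2
      \<le> (\<Sum>x\<in>A. (sqrt (w x))\<^sup>2) * (\<Sum>x\<in>A. (sqrt (w x) * a x)\<^sup>2)"
    by (rule Cauchy_Schwarz_ineq_sum)
  moreover have "(\<Sum>x\<in>A. sqrt (w x) * (sqrt (w x) * a x)) = (\<Sum>x\<in>A. w x * a x)"
    by (rule sum.cong) (use assms in \<open>auto simp: mult.assoc[symmetric]\<close>)
  moreover have "(\<Sum>x\<in>A. (sqrt (w x))\<^sup>2) = (\<Sum>x\<in>A. w x)"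
    by (rule sum.cong) (use assms in auto)
  moreover have "(\<Sum>x\<in>A. (sqrt (w x) * a x)\<^sup>2) = (\<Sum>x\<in>A. w x * (a x)\<^sup>2)"
    by (rule sum.cong) (use assms in \<open>auto simp: power_mult_distrib\<close>)
  ultimately show ?thesis by simp
qed

lemma sum_sq_substochastic_le:
  fixes w :: "'i \<Rightarrow> 'j \<Rightarrow> real" and e :: "'j \<Rightarrow> real"
  assumes w: "\<And>k m. 0 \<le> w k m"
    and rows: "\<And>k. k \<in> I \<Longrightarrow> (\<Sum>m\<in>J. w k m) \<le> 1"
    and cols: "\<And>m. m \<in> J \<Longrightarrow> (\<Sum>k\<in>I. w k m) \<le> 1"
  shows "(\<Sum>k\<in>I. (\<Sum>m\<in>J. w k m * e m)\<^sup>2) \<le> (\<Sum>m\<in>J. (e m)\<^sup>2)"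
proof -
  have row_sq: "(\<Sum>m\<in>J. w k m * e m)\<^sup>2 \<le> (\<Sum>m\<in>J. w k m * (e m)\<^sup>2)" if "k \<in> I" for k
  proof -
    have "(\<Sum>m\<in>J. w k m * e m)\<^sup>2 \<le> (\<Sum>m\<in>J. w k m) * (\<Sum>m\<in>J. w k m * (e m)\<^sup>2)"
      using w by (intro Cauchy_Schwarz_ineq_sum_weighted)
    also have "\<dots> \<le> (\<Sum>m\<in>J. w k m * (e m)\<^sup>2)"
      using w rows[OF that] by (intro mult_left_le_one_le sum_nonneg) simp_all
    finally show ?thesis .
  qed
  have "(\<Sum>k\<in>I. (\<Sum>m\<in>J. w k m * e m)\<^sup>2) \<le> (\<Sum>k\<in>I. \<Sum>m\<in>J. w k m * (e m)\<^sup>2)"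
    by (rule sum_mono) (rule row_sq)
  also have "\<dots> = (\<Sum>m\<in>J. (e m)\<^sup>2 * (\<Sum>k\<in>I. w k m))"
    by (subst sum.swap) (simp add: sum_distrib_left sum_distrib_right mult.commute)
  also have "\<dots> \<le> (\<Sum>m\<in>J. (e m)\<^sup>2)"
    using w cols by (intro sum_mono mult_right_le_one_le sum_nonneg) simp_all
  finally show ?thesis .
qed

lemma sum_by_parts_cdf:
  fixes a f :: "nat \<Rightarrow> real"
  shows "(\<Sum>m<Suc n. a m * f m) = cdf a n * f n + (\<Sum>m<n. cdf a m * (f m - f (Suc m)))"
proof (induction n)
  case (Suc n)
  have "cdf a (Suc n) = cdf a n + a (Suc n)" by (simp add: cdf_def)
  with Suc show ?case by (simp add: algebra_simps)
qed (simp add: cdf_def)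

text \<open>The last CDF difference vanishes since both laws have total mass 1.\<close>
lemma cdf_Lshift_diff_by_parts:
  assumes Dl: "Dl > 0" and u: "u \<in> cat_simplex d" and v: "v \<in> cat_simplex d" and k: "k < d - 1"
  shows "cdf (Lshift th0 Dl d b u) k - cdf (Lshift th0 Dl d b v) k
       = (\<Sum>m<d - 1. (cproj_cdf th0 Dl k (theta th0 Dl m + b) - cproj_cdf th0 Dl k (theta th0 Dl (Suc m) + b))
                     * (cdf u m - cdf v m))"
proof -
  define n where "n = d - 1"
  have dn: "d = Suc n" using k by (simp add: n_def)
  define f where "f m = cproj_cdf th0 Dl k (theta th0 Dl m + b)" for m
  have cdf_diff: "cdf (\<lambda>m. u m - v m) m = cdf u m - cdf v m" for m by (simp add: cdf_def sum_subtractf)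
  have "cdf u n = 1" "cdf v n = 1"
    using u v by (simp_all add: cdf_def cat_simplex_def dn lessThan_Suc_atMost[symmetric])
  have "cdf (Lshift th0 Dl d b u) k - cdf (Lshift th0 Dl d b v) k
      = (\<Sum>m<d. u m * f m) - (\<Sum>m<d. v m * f m)"
    unfolding cdf_Lshift[OF Dl u k] cdf_Lshift[OF Dl v k] f_def ..
  also have "\<dots> = (\<Sum>m<Suc n. (u m - v m) * f m)"
    unfolding dn by (simp add: sum_subtractf left_diff_distrib)
  also have "\<dots> = (\<Sum>m<n. (f m - f (Suc m)) * (cdf u m - cdf v m))"
    unfolding sum_by_parts_cdf cdf_diff \<open>cdf u n = 1\<close> \<open>cdf v n = 1\<close> by (simp add: mult.commute)
  finally show ?thesis unfolding f_def n_def .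
qed

text \<open>On CDF differences the projected shift acts by a doubly substochastic matrix.\<close>
lemma sum_sq_cdf_Lshift_diff_le:
  assumes Dl: "Dl > 0" and u: "u \<in> cat_simplex d" and v: "v \<in> cat_simplex d"
  shows "(\<Sum>k<d - 1. (cdf (Lshift th0 Dl d b u) k - cdf (Lshift th0 Dl d b v) k)\<^sup>2)
       \<le> (\<Sum>k<d - 1. (cdf u k - cdf v k)\<^sup>2)"
proof -
  define n where "n = d - 1"
  define x where "x m = theta th0 Dl m + b" for m
  define w where "w k m = cproj_cdf th0 Dl k (x m) - cproj_cdf th0 Dl k (x (Suc m))" for k m
  have x_le: "x m \<le> x (Suc m)" and x_step: "x (Suc m) - x m = Dl" for m
    using Dl by (simp_all add: x_def theta_def algebra_simps)
  have "(\<Sum>k<d - 1. (cdf (Lshift th0 Dl d b u) k - cdf (Lshift th0 Dl d b v) k)\<^sup>2)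
      = (\<Sum>k<n. (\<Sum>m<n. w k m * (cdf u m - cdf v m))\<^sup>2)"
    unfolding n_def w_def x_def by (intro sum.cong refl) (simp add: cdf_Lshift_diff_by_parts[OF Dl u v])
  also have "\<dots> \<le> (\<Sum>m<n. (cdf u m - cdf v m)\<^sup>2)"
  proof (rule sum_sq_substochastic_le)
    show "0 \<le> w k m" for k m unfolding w_def using cproj_cdf_antimono[OF Dl x_le] by simp
    show "(\<Sum>m<n. w k m) \<le> 1" for k
    proof -
      have "(\<Sum>m<n. w k m) = cproj_cdf th0 Dl k (x 0) - cproj_cdf th0 Dl k (x n)"
        unfolding w_def by (rule sum_lessThan_telescope')
      then show ?thesis using cproj_cdf_bounds[of th0 Dl k "x 0"] cproj_cdf_bounds[of th0 Dl k "x n"]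
        by linarith
    qed
    show "(\<Sum>k<n. w k m) \<le> 1" for m
    proof -
      have "(\<Sum>k<n. w k m) \<le> (x (Suc m) - x m) / Dl"
        unfolding w_def sum_subtractf by (rule sum_cproj_cdf_diff_le[OF Dl x_le])
      then show ?thesis using Dl by (simp add: x_step)
    qed
  qed
  finally show ?thesis unfolding n_def .
qed

lemma lC_Lshift_le:
  assumes "Dl > 0" "u \<in> cat_simplex d" "v \<in> cat_simplex d"
  shows "lC Dl d (Lshift th0 Dl d b u) (Lshift th0 Dl d b v) \<le> lC Dl d u v"
  unfolding lC_def using sum_sq_cdf_Lshift_diff_le[OF assms] assms(1)
  by (simp add: mult_left_mono)

lemma lC_Gop_le:
  fixes K :: "'s::finite \<Rightarrow> 's pmf"
  assumes Dl: "Dl > 0" and p: "\<And>j. p j \<in> cat_simplex d" and q: "\<And>j. q j \<in> cat_simplex d"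
    and fin: "\<And>j. finite (set_pmf (Rl i j))"
    and B: "\<And>j r. r \<in> set_pmf (Rl i j) \<Longrightarrow>
              lC Dl d (Lshift th0 Dl d (r - g) (p j)) (Lshift th0 Dl d (r - g') (q j)) \<le> B"
  shows "lC Dl d (Gop th0 Dl d K Rl g p i) (Gop th0 Dl d K Rl g' q i) \<le> B"
  unfolding Gop_eq_expectation[where Rl = Rl and i = i, OF Dl p fin]
    Gop_eq_expectation[where Rl = Rl and i = i, OF Dl q fin]
  using Dl by (intro lC_expectation_le fin B) simp_all

lemma lC_le_lCinf:
  fixes p q :: "'s::finite \<Rightarrow> nat \<Rightarrow> real"
  shows "lC Dl d (p i) (q i) \<le> lCinf Dl d p q"
  unfolding lCinf_def by (rule Max_ge) auto

lemma lCinf_le: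
  fixes p q :: "'s::finite \<Rightarrow> nat \<Rightarrow> real"
  shows "(\<And>i. lC Dl d (p i) (q i) \<le> c) \<Longrightarrow> lCinf Dl d p q \<le> c"
  unfolding lCinf_def by (subst Max_le_iff) auto

lemma lC_Gop_Lipschitz:
  fixes K :: "'s::finite \<Rightarrow> 's pmf"
  assumes Dl: "Dl > 0" and p: "\<And>j. p j \<in> cat_simplex d" and q: "\<And>j. q j \<in> cat_simplex d"
    and fin: "\<And>j. finite (set_pmf (Rl i j))"
  shows "lC Dl d (Gop th0 Dl d K Rl g p i) (Gop th0 Dl d K Rl g' q i) \<le> lCinf Dl d p q + \<bar>g - g'\<bar> / sqrt Dl"
proof (rule lC_Gop_le[where Rl = Rl and i = i, OF Dl p q fin])
  fix j r
  have "lC Dl d (Lshift th0 Dl d (r - g) (p j)) (Lshift th0 Dl d (r - g') (q j))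
      \<le> lC Dl d (Lshift th0 Dl d (r - g) (p j)) (Lshift th0 Dl d (r - g) (q j))
        + lC Dl d (Lshift th0 Dl d (r - g) (q j)) (Lshift th0 Dl d (r - g') (q j))"
    using Dl by (intro lC_triangle) simp
  also have "\<dots> \<le> lC Dl d (p j) (q j) + \<bar>(r - g) - (r - g')\<bar> / sqrt Dl"
    by (intro add_mono lC_Lshift_le lC_Lshift_shift_le Dl p q)
  also have "lC Dl d (p j) (q j) \<le> lCinf Dl d p q" by (rule lC_le_lCinf)
  finally show "lC Dl d (Lshift th0 Dl d (r - g) (p j)) (Lshift th0 Dl d (r - g') (q j))
      \<le> lCinf Dl d p q + \<bar>g - g'\<bar> / sqrt Dl" by (simp add: abs_minus_commute)
qed

lemma hmu_eq_mix:
  "hmu th0 Dl d K mu Rl g p i = (\<lambda>k. (1 - pmf mu i) * p i k + pmf mu i * Gop th0 Dl d K Rl g p i k)"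
  by (simp add: hmu_def fun_eq_iff)

lemma lC_hmu_le:
  fixes K :: "'s::finite \<Rightarrow> 's pmf"
  assumes Dl: "Dl > 0" and p: "\<And>j. p j \<in> cat_simplex d" and q: "\<And>j. q j \<in> cat_simplex d"
    and fin: "\<And>i j. finite (set_pmf (Rl i j))" and lam: "lam \<ge> 1 / sqrt Dl"
  shows "lC Dl d (hmu th0 Dl d K mu Rl g p i) (hmu th0 Dl d K mu Rl g' q i) \<le> lCinf Dl d p q + lam * \<bar>g - g'\<bar>"
proof -
  define m where "m = pmf mu i"
  have m: "0 \<le> m" "m \<le> 1" by (simp_all add: m_def pmf_le_1)
  have "lC Dl d (hmu th0 Dl d K mu Rl g p i) (hmu th0 Dl d K mu Rl g' q i)
      \<le> lC Dl d (\<lambda>k. (1 - m) * p i k) (\<lambda>k. (1 - m) * q i k)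
        + lC Dl d (\<lambda>k. m * Gop th0 Dl d K Rl g p i k) (\<lambda>k. m * Gop th0 Dl d K Rl g' q i k)"
    unfolding hmu_eq_mix m_def[symmetric] using Dl by (intro lC_add_le) simp
  also have "\<dots> = (1 - m) * lC Dl d (p i) (q i) + m * lC Dl d (Gop th0 Dl d K Rl g p i) (Gop th0 Dl d K Rl g' q i)"
    using Dl m by (simp add: lC_scale)
  also have "\<dots> \<le> (1 - m) * lCinf Dl d p q + m * (lCinf Dl d p q + \<bar>g - g'\<bar> / sqrt Dl)"
  proof (intro add_mono mult_left_mono)
    show "lC Dl d (p i) (q i) \<le> lCinf Dl d p q" by (rule lC_le_lCinf)
    show "lC Dl d (Gop th0 Dl d K Rl g p i) (Gop th0 Dl d K Rl g' q i) \<le> lCinf Dl d p q + \<bar>g - g'\<bar> / sqrt Dl"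
      using lC_Gop_Lipschitz[OF Dl p q fin] .
  qed (use m in simp_all)
  also have "\<dots> = lCinf Dl d p q + m * ((1 / sqrt Dl) * \<bar>g - g'\<bar>)" by (simp add: algebra_simps)
  also have "\<dots> \<le> lCinf Dl d p q + 1 * (lam * \<bar>g - g'\<bar>)"
  proof -
    have "0 \<le> 1 / sqrt Dl" using Dl by simp
    then show ?thesis using m lam by (intro add_left_mono mult_mono mult_right_mono) simp_all
  qed
  finally show ?thesis by simp
qed

lemma Tmap_nonexpansive:
  fixes K :: "'s::finite \<Rightarrow> 's pmf"
  assumes Dl: "Dl > 0" and fin: "\<And>i j. finite (set_pmf (Rl i j))"
    and lam: "lam \<ge> 1 / sqrt Dl" and z: "z \<in> Zset d" and z': "z' \<in> Zset d"
  shows "dlam Dl d lam (Tmap th0 Dl d K mu Rl z) (Tmap th0 Dl d K mu Rl z') \<le> dlam Dl d lam z z'"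
proof -
  obtain p g q g' where zz: "z = (p, g)" "z' = (q, g')" by (cases z, cases z')
  have p: "\<And>j. p j \<in> cat_simplex d" and q: "\<And>j. q j \<in> cat_simplex d"
    using z z' by (simp_all add: zz Zset_def)
  have "lCinf Dl d (hmu th0 Dl d K mu Rl g p) (hmu th0 Dl d K mu Rl g' q) \<le> lCinf Dl d p q + lam * \<bar>g - g'\<bar>"
    by (intro lCinf_le lC_hmu_le[OF Dl p q fin lam])
  then show ?thesis by (simp add: zz dlam_def Tmap_def)
qed

subsection \<open>The stationary law and the sampled update\<close>

lemma Ppow_nonneg: "0 \<le> Ppow K n i j"
  by (induction n arbitrary: j) (auto simp: Ptr_def intro!: sum_nonneg)

lemma stationary_Ppow:
  fixes K :: "'s::finite \<Rightarrow> 's pmf"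
  assumes "stationary K mu"
  shows "(\<Sum>i\<in>UNIV. pmf mu i * Ppow K n i j) = pmf mu j"
proof (induction n arbitrary: j)
  case 0
  then show ?case by (simp add: if_distrib cong: if_cong)
next
  case (Suc n)
  have "(\<Sum>i\<in>UNIV. pmf mu i * Ppow K (Suc n) i j) = (\<Sum>l\<in>UNIV. (\<Sum>i\<in>UNIV. pmf mu i * Ppow K n i l) * Ptr K l j)"
    by (simp add: sum_distrib_left sum_distrib_right mult.assoc) (rule sum.swap)
  also have "\<dots> = pmf mu j" using Suc assms by (simp add: stationary_def)
  finally show ?case .
qed

lemma pmf_stationary_pos:
  fixes K :: "'s::finite \<Rightarrow> 's pmf"
  assumes irr: "irreducible_chain K" and st: "stationary K mu"
  shows "pmf mu j > 0"
proof -
  obtain i where "i \<in> set_pmf mu" using set_pmf_not_empty[of mu] by blast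
  then have i: "pmf mu i > 0" by (simp add: pmf_positive)
  obtain n where n: "Ppow K n i j > 0" using irr by (auto simp: irreducible_chain_def)
  have "0 < pmf mu i * Ppow K n i j" using i n by simp
  also have "\<dots> \<le> (\<Sum>i\<in>UNIV. pmf mu i * Ppow K n i j)"
    by (rule member_le_sum) (auto simp: Ppow_nonneg)
  also have "\<dots> = pmf mu j" by (rule stationary_Ppow[OF st])
  finally show ?thesis .
qed

lemma expectation_Ylaw:
  fixes K :: "'s::finite \<Rightarrow> 's pmf" and f :: "'s \<times> real \<times> 's \<Rightarrow> real"
  assumes "\<And>i j. finite (set_pmf (Rl i j))"
  shows "measure_pmf.expectation (Ylaw K mu Rl) f
       = measure_pmf.expectation mu (\<lambda>s. measure_pmf.expectation (K s) (\<lambda>s'.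
           measure_pmf.expectation (Rl s s') (\<lambda>r. f (s, r, s'))))"
  unfolding Ylaw_def by (simp add: expectation_bind_pmf_finite assms)

lemma expectation_Hupd:
  fixes K :: "'s::finite \<Rightarrow> 's pmf"
  assumes Dl: "Dl > 0" and p: "\<And>j. p j \<in> cat_simplex d" and fin: "\<And>i j. finite (set_pmf (Rl i j))"
  shows "measure_pmf.expectation (Ylaw K mu Rl) (\<lambda>y. Hupd th0 Dl d g p y s k) = hmu th0 Dl d K mu Rl g p s k"
proof -
  have "measure_pmf.expectation (Ylaw K mu Rl) (\<lambda>y. Hupd th0 Dl d g p y s k)
      = measure_pmf.expectation mu (\<lambda>s0. if s0 = s then Gop th0 Dl d K Rl g p s k else p s k)"
    unfolding expectation_Ylaw[OF fin] Hupd_def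
    by (intro arg_cong[where f = "measure_pmf.expectation mu"] ext)
      (auto simp: Gop_eq_expectation[OF Dl p fin])
  then show ?thesis by (simp add: expectation_if_eq hmu_def algebra_simps)
qed

lemma expectation_reward_Ylaw:
  fixes K :: "'s::finite \<Rightarrow> 's pmf"
  assumes "\<And>i j. finite (set_pmf (Rl i j))"
  shows "measure_pmf.expectation (Ylaw K mu Rl) (\<lambda>y. fst (snd y)) = gain K mu Rl"
  unfolding expectation_Ylaw[OF assms] gain_def Ptr_def by (simp add: expectation_finite_UNIV)

lemma gain_in_unit_interval:
  fixes K :: "'s::finite \<Rightarrow> 's pmf"
  assumes "\<And>i j. finite (set_pmf (Rl i j)) \<and> set_pmf (Rl i j) \<subseteq> {0..1}"
  shows "gain K mu Rl \<in> {0..1}"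
  unfolding expectation_reward_Ylaw[symmetric, OF conjunct1[OF assms]]
  using assms by (intro expectation_in_unit_interval) (fastforce simp: Ylaw_def)

lemma hmu_eq_self_iff:
  assumes "\<And>i. pmf mu i > 0"
  shows "hmu th0 Dl d K mu Rl g p = p \<longleftrightarrow> Gop th0 Dl d K Rl g p = p"
proof -
  have diff: "hmu th0 Dl d K mu Rl g p i k - p i k = pmf mu i * (Gop th0 Dl d K Rl g p i k - p i k)" for i k
    by (simp add: hmu_def algebra_simps)
  have "hmu th0 Dl d K mu Rl g p = p \<longleftrightarrow> (\<forall>i k. hmu th0 Dl d K mu Rl g p i k - p i k = 0)"
    by (simp add: fun_eq_iff)
  also have "\<dots> \<longleftrightarrow> (\<forall>i k. Gop th0 Dl d K Rl g p i k - p i k = 0)"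
    unfolding diff using assms by (simp add: less_imp_neq[symmetric])
  also have "\<dots> \<longleftrightarrow> Gop th0 Dl d K Rl g p = p"
    by (simp add: fun_eq_iff)
  finally show ?thesis .
qed

lemma Tmap_fixed_points:
  fixes K :: "'s::finite \<Rightarrow> 's pmf"
  assumes irr: "irreducible_chain K" and st: "stationary K mu"
    and R: "\<And>i j. finite (set_pmf (Rl i j)) \<and> set_pmf (Rl i j) \<subseteq> {0..1}"
  shows "{z \<in> Zset d. Tmap th0 Dl d K mu Rl z = z}
       = {(p, gain K mu Rl) | p. (\<forall>i. p i \<in> cat_simplex d) \<and> Gop th0 Dl d K Rl (gain K mu Rl) p = p}"
proof -
  have fixed_iff: "Tmap th0 Dl d K mu Rl (p, g) = (p, g)
      \<longleftrightarrow> g = gain K mu Rl \<and> Gop th0 Dl d K Rl (gain K mu Rl) p = p" for p g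
    using hmu_eq_self_iff[OF pmf_stationary_pos[OF irr st]] by (auto simp: Tmap_def)
  show ?thesis
    using gain_in_unit_interval[OF R, of K mu] by (auto simp: Zset_def fixed_iff)
qed

theorem proposition8:
  fixes K :: "'s::finite \<Rightarrow> 's pmf" and mu :: "'s pmf" and Rl :: "'s \<Rightarrow> 's \<Rightarrow> real pmf"
    and th0 Dl lam :: real and d :: nat
  assumes "Dl > 0" and "d > 0"
    and "irreducible_chain K" and "aperiodic_chain K" and "stationary K mu"
    and "\<And>i j. finite (set_pmf (Rl i j)) \<and> set_pmf (Rl i j) \<subseteq> {0..1}"
    and "lam \<ge> 1 / sqrt Dl"
  shows "(\<forall>(p, g)\<in>Zset d.
            (\<forall>s k. measure_pmf.expectation (Ylaw K mu Rl) (\<lambda>y. Hupd th0 Dl d g p y s k)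
                     = hmu th0 Dl d K mu Rl g p s k)
          \<and> measure_pmf.expectation (Ylaw K mu Rl) (\<lambda>y. fst (snd y)) = gain K mu Rl)
       \<and> (\<forall>z\<in>Zset d. \<forall>z'\<in>Zset d.
            dlam Dl d lam (Tmap th0 Dl d K mu Rl z) (Tmap th0 Dl d K mu Rl z') \<le> dlam Dl d lam z z')
       \<and> {z \<in> Zset d. Tmap th0 Dl d K mu Rl z = z}
          = {(p, gain K mu Rl) | p. (\<forall>i. p i \<in> cat_simplex d) \<and> Gop th0 Dl d K Rl (gain K mu Rl) p = p}"
proof (intro conjI ballI case_prodI2)
  note Dl = assms(1) and irr = assms(3) and st = assms(5) and R = assms(6)
    and lam = assms(7)
  have fin: "\<And>i j. finite (set_pmf (Rl i j))" using R by blast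
  {
    fix z and p :: "'s \<Rightarrow> nat \<Rightarrow> real" and g assume "z \<in> Zset d" "z = (p, g)"
    then have p: "\<And>j. p j \<in> cat_simplex d" by (simp add: Zset_def)
    show "\<forall>s k. measure_pmf.expectation (Ylaw K mu Rl) (\<lambda>y. Hupd th0 Dl d g p y s k)
                     = hmu th0 Dl d K mu Rl g p s k"
      using expectation_Hupd[where Rl = Rl and p = p, OF Dl p fin] by blast
    show "measure_pmf.expectation (Ylaw K mu Rl) (\<lambda>y. fst (snd y)) = gain K mu Rl"
      by (rule expectation_reward_Ylaw[OF fin])
  next
    fix z z' :: "('s \<Rightarrow> nat \<Rightarrow> real) \<times> real" assume "z \<in> Zset d" "z' \<in> Zset d"
    then show "dlam Dl d lam (Tmap th0 Dl d K mu Rl z) (Tmap th0 Dl d K mu Rl z') \<le> dlam Dl d lam z z'"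
      by (rule Tmap_nonexpansive[OF Dl fin lam])
  }
  show "{z \<in> Zset d. Tmap th0 Dl d K mu Rl z = z}
      = {(p, gain K mu Rl) | p. (\<forall>i. p i \<in> cat_simplex d) \<and> Gop th0 Dl d K Rl (gain K mu Rl) p = p}"
    by (rule Tmap_fixed_points[OF irr st R])
qed

end
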